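(* Let $N\ge 2$ and $m$ be integers and let $v$ be a nonzero complex number with $v^N=-1$. For integers $n$ put $\{n\}=v^n-v^{-n}$, $A(j,k)=\{j-k\}\{j+k\}$, $S(k,l)=\prod_{k\le n\le l}\{n\}$, and for a finite family ${\prod'_{i\in I}}a_i=\sum_{i\in I}\prod_{r\in I\setminus\{i\}}a_r$. Define $$D(j,l)=(v^j+v^{-j})\Big(\prod_{k=1}^lA(j,k)+2\{j\}^2{\prod_{1\le k\le l}}'A(j,k)\Big)+\frac{mj}{2}\{j\}\prod_{k=1}^lA(j,k).$$ Then for $1\le j\le N-1$ and $0\le l\le N-1$, $$D(N-j,l)+D(j,l)=\frac{mN}{2}S(j-l,j+l).$$ *)

theory Defs
  imports Complex_Main
begin

definition qbr :: "complex \<Rightarrow> int \<Rightarrow> complex" where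
  "qbr v n = v powi n - v powi (-n)"

definition qA :: "complex \<Rightarrow> int \<Rightarrow> int \<Rightarrow> complex" where
  "qA v j k = qbr v (j - k) * qbr v (j + k)"

definition qS :: "complex \<Rightarrow> int \<Rightarrow> int \<Rightarrow> complex" where
  "qS v k l = (\<Prod>n\<in>{k..l}. qbr v n)"

definition prodp :: "'a set \<Rightarrow> ('a \<Rightarrow> complex) \<Rightarrow> complex" where
  "prodp I a = (\<Sum>i\<in>I. \<Prod>r\<in>I - {i}. a r)"

definition qD :: "complex \<Rightarrow> int \<Rightarrow> int \<Rightarrow> int \<Rightarrow> complex" where
  "qD v m j l =
     (v powi j + v powi (-j)) *
       ((\<Prod>k\<in>{1..l}. qA v j k) + 2 * (qbr v j)^2 * prodp {1..l} (qA v j))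
     + of_int m * of_int j / 2 * qbr v j * (\<Prod>k\<in>{1..l}. qA v j k)"

end

theory Submission
  imports Defs
begin

text \<open>
  If \<open>v\<^sup>N = -1\<close>, the reflection \<open>n \<mapsto> N - n\<close> fixes every quantum integer \<open>{n}\<close>, hence every
  \<open>A(j,k)\<close>, while it changes the sign of \<open>v\<^sup>j + v\<^sup>-\<^sup>j\<close>. So the first summands of \<open>D(N-j,l)\<close> and
  \<open>D(j,l)\<close> cancel, and the remaining ones add up to \<open>mN/2 {j} \<Prod>A(j,k)\<close>. Pairing the
  factors \<open>{j-k}{j+k}\<close> shows that this is \<open>mN/2 S(j-l,j+l)\<close>.
\<close>

lemma powi_reflect:
  fixes v :: complex
  assumes "v \<noteq> 0" "v ^ N = -1"
  shows "v powi (int N - n) = - (v powi (-n))" and "v powi (n - int N) = - (v powi n)"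
  using assms by (simp_all add: power_int_diff power_int_minus field_simps)

lemma qbr_reflect:
  assumes "v \<noteq> 0" "v ^ N = -1"
  shows "qbr v (int N - n) = qbr v n"
  unfolding qbr_def using powi_reflect[OF assms] by simp

lemma qA_reflect:
  assumes "v \<noteq> 0" "v ^ N = -1"
  shows "qA v (int N - j) k = qA v j k"
  using qbr_reflect[OF assms, of "j + k"] qbr_reflect[OF assms, of "j - k"]
  by (simp add: qA_def algebra_simps)

lemma powi_sum_reflect:
  fixes v :: complex
  assumes "v \<noteq> 0" "v ^ N = -1"
  shows "v powi (int N - j) + v powi (- (int N - j)) = - (v powi j + v powi (-j))"
  using powi_reflect[OF assms] by simp

lemma qS_centered:
  assumes "0 \<le> l"
  shows "qS v (j - l) (j + l) = qbr v j * (\<Prod>k\<in>{1..l}. qA v j k)"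
  using assms
proof (induction l rule: int_ge_induct)
  case base
  then show ?case by (simp add: qS_def)
next
  case (step l)
  have "{j - (l + 1)..j + (l + 1)} = insert (j - l - 1) (insert (j + l + 1) {j - l..j + l})"
    using step.hyps by auto
  then have "qS v (j - (l + 1)) (j + (l + 1))
      = qbr v (j - l - 1) * qbr v (j + l + 1) * qS v (j - l) (j + l)"
    unfolding qS_def using step.hyps by simp
  moreover have "{1..l + 1} = insert (l + 1) {1..l}"
    using step.hyps by auto
  ultimately show ?case
    by (simp add: step.IH qA_def algebra_simps)
qed

theorem lemma2p5:
  fixes N :: nat and m j l :: int and v :: complex
  assumes "N \<ge> 2" and "v \<noteq> 0" and "v ^ N = -1"
    and "1 \<le> j" and "j \<le> int N - 1"
    and "0 \<le> l" and "l \<le> int N - 1"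
  shows "qD v m (int N - j) l + qD v m j l = of_int m * of_nat N / 2 * qS v (j - l) (j + l)"
proof -
  have "qA v (int N - j) = qA v j"
    using qA_reflect[OF assms(2,3)] by blast
  moreover have "qbr v (int N - j) = qbr v j"
    using qbr_reflect[OF assms(2,3)] .
  ultimately show ?thesis
    unfolding qD_def powi_sum_reflect[OF assms(2,3)] qS_centered[OF assms(6)]
    by (simp add: algebra_simps add_divide_distrib[symmetric])
qed

end
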